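(* Let $n$ be a positive integer, $\mathcal{X}=\{\frac1n,\frac2n,\ldots,\frac nn\}$, and let $\mathcal{H}_{TH;n}=\{h_b : b\in\{\frac{1}{2n},\frac{3}{2n},\ldots,\frac{2n+1}{2n}\}\}$ where $h_b:\mathcal{X}\to\{0,1\}$ is given by $h_b(x)=1$ iff $x\le b$. Then for every $0<\alpha<1/3$, the class $\mathcal{H}_{TH;n}$ is $(\alpha,\alpha)$-separable.
   Context: For a class $\mathcal{H}$ over finite domain $\mathcal{X}$, its hypotheses graph is bipartite with parts $\mathcal{H}$ and $\mathcal{X}$, $h$ adjacent to $x$ iff $h(x)=1$. For $S\subseteq\mathcal{X}$, $T\subseteq\mathcal{H}$, $d(S,T)=\frac{e(S,T)}{|S||T|}$ where $e(S,T)$ is the number of edges between $S$ and $T$. Two hypotheses $h_1,h_2$ are $\epsilon$-close if $|\{x: h_1(x)\ne h_2(x)\}|\le\epsilon|\mathcal{X}|$; $B_h(\epsilon)$ is the set of hypotheses $\epsilon$-close to $h$. $T\subseteq\mathcal{H}$ is $(\alpha,\epsilon)$-tight if there is $h$ with $|T\cap B_h(\epsilon)|\ge\alpha|T|$. $\mathcal{H}$ is $(\alpha,\epsilon)$-separable if for every $T\subseteq\mathcal{H}$ that is not $(\alpha,\epsilon)$-tight there exist $S\subseteq\mathcal{X}$ and disjoint $T_0,T_1\subseteq T$ with $|S|\ge\alpha|\mathcal{X}|$, $|T_0|\ge\alpha|T|$, $|T_1|\ge\alpha|T|$ and $|d(S,T_0)-d(S,T_1)|\ge\alpha$. *)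

theory Defs
  imports Complex_Main
begin

text \<open>A hypothesis class over a finite domain X is a set H of functions
  'x \<Rightarrow> bool; h(x)=1 is rendered as h x = True.  The hypotheses graph has an
  edge between h and x iff h x.\<close>

definition edges :: "'x set \<Rightarrow> ('x \<Rightarrow> bool) set \<Rightarrow> nat" where
  "edges S T = card {(x, h). x \<in> S \<and> h \<in> T \<and> h x}"

definition density :: "'x set \<Rightarrow> ('x \<Rightarrow> bool) set \<Rightarrow> real" where
  "density S T = real (edges S T) / (real (card S) * real (card T))"

definition eps_close :: "'x set \<Rightarrow> real \<Rightarrow> ('x \<Rightarrow> bool) \<Rightarrow> ('x \<Rightarrow> bool) \<Rightarrow> bool" where
  "eps_close X \<epsilon> h1 h2 \<longleftrightarrow> real (card {x \<in> X. h1 x \<noteq> h2 x}) \<le> \<epsilon> * real (card X)"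

definition ball_hyp :: "'x set \<Rightarrow> ('x \<Rightarrow> bool) set \<Rightarrow> ('x \<Rightarrow> bool) \<Rightarrow> real \<Rightarrow> ('x \<Rightarrow> bool) set" where
  "ball_hyp X H h \<epsilon> = {h' \<in> H. eps_close X \<epsilon> h h'}"

definition tight :: "'x set \<Rightarrow> ('x \<Rightarrow> bool) set \<Rightarrow> real \<Rightarrow> real \<Rightarrow> ('x \<Rightarrow> bool) set \<Rightarrow> bool" where
  "tight X H \<alpha> \<epsilon> T \<longleftrightarrow>
     (\<exists>h \<in> H. real (card (T \<inter> ball_hyp X H h \<epsilon>)) \<ge> \<alpha> * real (card T))"

definition separable :: "'x set \<Rightarrow> ('x \<Rightarrow> bool) set \<Rightarrow> real \<Rightarrow> real \<Rightarrow> bool" where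
  "separable X H \<alpha> \<epsilon> \<longleftrightarrow>
     (\<forall>T \<subseteq> H. \<not> tight X H \<alpha> \<epsilon> T \<longrightarrow>
        (\<exists>S T0 T1. S \<subseteq> X \<and> T0 \<subseteq> T \<and> T1 \<subseteq> T \<and> T0 \<inter> T1 = {} \<and>
           real (card S) \<ge> \<alpha> * real (card X) \<and>
           real (card T0) \<ge> \<alpha> * real (card T) \<and>
           real (card T1) \<ge> \<alpha> * real (card T) \<and>
           \<bar>density S T0 - density S T1\<bar> \<ge> \<alpha>))"

definition X_TH :: "nat \<Rightarrow> real set" where
  "X_TH n = {real k / real n | k. k \<in> {1..n}}"

definition h_thr :: "real \<Rightarrow> real \<Rightarrow> bool" where
  "h_thr b x \<longleftrightarrow> x \<le> b"

definition H_TH :: "nat \<Rightarrow> (real \<Rightarrow> bool) set" where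
  "H_TH n = {h_thr (real (2 * k + 1) / (2 * real n)) | k. k \<le> n}"

end

theory Submission
  imports Defs
begin

text \<open>Index the hypotheses by k \<in> {0..n} and the points by j \<in> {1..n}, so that the
  hypothesis k labels the point j with 1 iff j \<le> k and two hypotheses k \<le> l differ on
  exactly l - k points.  Given a non-tight T with index set K, let a be the smallest
  index with at least an \<alpha>-fraction of K in {..a} and b the largest with at least an
  \<alpha>-fraction in {b..}.  Every hypothesis of a window of width \<alpha>n starting at a is
  \<alpha>-close to the hypothesis a, so by non-tightness such a window holds less than an
  \<alpha>-fraction of K; as {..<a} and {b<..} do too and \<alpha> < 1/3, the window [a, b] must be
  wider than \<alpha>n.  The points strictly between a and b then separate the hypotheses in
  {..a}, which reject them all, from those in {b..}, which accept them all.\<close>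

lemma density_eq_0:
  assumes "\<forall>x\<in>S. \<forall>h\<in>T. \<not> h x"
  shows "density S T = 0"
proof -
  have "{(x, h). x \<in> S \<and> h \<in> T \<and> h x} = {}" using assms by auto
  then show ?thesis unfolding density_def edges_def by (metis card.empty divide_eq_0_iff of_nat_0)
qed

lemma density_eq_1:
  assumes "finite S" "finite T" "S \<noteq> {}" "T \<noteq> {}" "\<forall>x\<in>S. \<forall>h\<in>T. h x"
  shows "density S T = 1"
proof -
  have "{(x, h). x \<in> S \<and> h \<in> T \<and> h x} = S \<times> T" using assms(5) by auto
  then show ?thesis
    unfolding density_def edges_def using assms(1-4) by (simp add: card_cartesian_product)
qed

lemma not_tight_imp_pos:
  assumes "\<not> tight X H \<alpha> \<epsilon> T" "H \<noteq> {}"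
  shows "0 < \<alpha> * real (card T)"
proof -
  obtain h where "h \<in> H" using assms(2) by blast
  then have "real (card (T \<inter> ball_hyp X H h \<epsilon>)) < \<alpha> * real (card T)"
    using assms(1) by (auto simp: tight_def not_le)
  then show ?thesis by (smt (verit) of_nat_0_le_iff)
qed

lemma exists_prefix_quantile:
  fixes K :: "nat set"
  assumes "finite K" "0 < c" "c \<le> real (card K)"
  obtains a where "a \<in> K" "c \<le> real (card (K \<inter> {..a}))" "real (card (K \<inter> {..<a})) < c"
proof -
  define P where "P a \<longleftrightarrow> c \<le> real (card (K \<inter> {..a}))" for a
  define a where "a = Least P"
  have "K \<inter> {..Max K} = K" using assms(1) by auto
  then have "P (Max K)" using assms(3) by (simp add: P_def)
  then have Pa: "P a" unfolding a_def by (rule LeastI)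
  have below: "real (card (K \<inter> {..<a})) < c"
  proof (cases a)
    case 0
    then show ?thesis using assms(2) by simp
  next
    case (Suc a')
    then have "\<not> P a'" using not_less_Least[of a' P] by (simp add: a_def)
    moreover have "{..<a} = {..a'}" using Suc by auto
    ultimately show ?thesis by (simp add: P_def)
  qed
  have "a \<in> K"
  proof (rule ccontr)
    assume "a \<notin> K"
    then have "K \<inter> {..a} = K \<inter> {..<a}" by (auto simp: le_less)
    then show False using Pa below by (simp add: P_def)
  qed
  with Pa below show ?thesis using that by (simp add: P_def)
qed

lemma exists_suffix_quantile:
  fixes K :: "nat set"
  assumes "finite K" "0 < c" "c \<le> real (card K)"
  obtains b where "b \<in> K" "c \<le> real (card (K \<inter> {b..}))" "real (card (K \<inter> {b<..})) < c"
proof -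
  define Q where "Q b \<longleftrightarrow> c \<le> real (card (K \<inter> {b..}))" for b
  define b where "b = Greatest Q"
  have bounded: "t \<le> Max K" if "Q t" for t
  proof (rule ccontr)
    assume "\<not> t \<le> Max K"
    then have "K \<inter> {t..} = {}" using assms(1) by (auto dest: Max_ge)
    then show False using that assms(2) by (simp add: Q_def)
  qed
  have "K \<inter> {0..} = K" by auto
  then have "Q 0" using assms(3) by (simp add: Q_def)
  then have Qb: "Q b" unfolding b_def using bounded by (rule GreatestI_nat)
  have "\<not> Q (Suc b)"
    using Greatest_le_nat[of Q "Suc b" "Max K"] bounded by (auto simp: b_def)
  moreover have "{b<..} = {Suc b..}" by auto
  ultimately have above: "real (card (K \<inter> {b<..})) < c" by (simp add: Q_def)
  have "b \<in> K"
  proof (rule ccontr)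
    assume "b \<notin> K"
    then have "K \<inter> {b..} = K \<inter> {b<..}" by (auto simp: le_less)
    then show False using Qb above by (simp add: Q_def)
  qed
  with Qb above show ?thesis using that by (simp add: Q_def)
qed

definition threshold_hyp :: "nat \<Rightarrow> nat \<Rightarrow> real \<Rightarrow> bool" where
  "threshold_hyp n k = h_thr (real (2 * k + 1) / (2 * real n))"

definition grid_point :: "nat \<Rightarrow> nat \<Rightarrow> real" where
  "grid_point n j = real j / real n"

lemma threshold_hyp_grid_point_iff:
  assumes "n > 0"
  shows "threshold_hyp n k (grid_point n j) \<longleftrightarrow> j \<le> k"
proof -
  have "threshold_hyp n k (grid_point n j) \<longleftrightarrow> real j / real n \<le> real (2 * k + 1) / (2 * real n)"
    by (simp add: threshold_hyp_def grid_point_def h_thr_def)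
  also have "\<dots> \<longleftrightarrow> 2 * real j \<le> real (2 * k + 1)"
    using assms by (simp add: field_simps)
  also have "\<dots> \<longleftrightarrow> j \<le> k" by linarith
  finally show ?thesis .
qed

lemma inj_threshold_hyp:
  assumes "n > 0"
  shows "inj (threshold_hyp n)"
proof (rule injI)
  fix k l
  assume "threshold_hyp n k = threshold_hyp n l"
  then have "j \<le> k \<longleftrightarrow> j \<le> l" for j using threshold_hyp_grid_point_iff[OF assms] by metis
  then show "k = l" by (meson le_antisym order_refl)
qed

lemma inj_grid_point:
  assumes "n > 0"
  shows "inj (grid_point n)"
  using assms by (auto intro!: injI simp: grid_point_def)

lemma X_TH_eq_image: "X_TH n = grid_point n ` {1..n}"
  by (auto simp: X_TH_def grid_point_def)

lemma H_TH_eq_image: "H_TH n = threshold_hyp n ` {..n}"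
  by (auto simp: H_TH_def threshold_hyp_def)

lemma card_X_TH:
  assumes "n > 0"
  shows "card (X_TH n) = n"
  using inj_grid_point[OF assms] by (simp add: X_TH_eq_image card_image inj_on_subset)

lemma card_threshold_hyp_image:
  assumes "n > 0"
  shows "card (threshold_hyp n ` K) = card K"
  using inj_threshold_hyp[OF assms] by (simp add: card_image inj_on_subset)

lemma card_disagree_threshold_hyp:
  assumes "n > 0" "a \<le> k" "k \<le> n"
  shows "card {x \<in> X_TH n. threshold_hyp n a x \<noteq> threshold_hyp n k x} = k - a"
proof -
  have "{x \<in> X_TH n. threshold_hyp n a x \<noteq> threshold_hyp n k x} = grid_point n ` {a<..k}"
    using assms by (auto simp: X_TH_eq_image threshold_hyp_grid_point_iff)
  moreover have "inj_on (grid_point n) {a<..k}"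
    using inj_grid_point[OF assms(1)] by (rule inj_on_subset) simp
  ultimately show ?thesis by (simp add: card_image)
qed

lemma threshold_hyp_in_ball:
  assumes "n > 0" "a \<le> k" "k \<le> n" "real k - real a \<le> \<epsilon> * real n"
  shows "threshold_hyp n k \<in> ball_hyp (X_TH n) (H_TH n) (threshold_hyp n a) \<epsilon>"
proof -
  have "threshold_hyp n k \<in> H_TH n" using assms(3) by (simp add: H_TH_eq_image)
  moreover have "real (card {x \<in> X_TH n. threshold_hyp n a x \<noteq> threshold_hyp n k x})
      \<le> \<epsilon> * real (card (X_TH n))"
    unfolding card_disagree_threshold_hyp[OF assms(1-3)] card_X_TH[OF assms(1)]
    using assms(2,4) by (simp add: of_nat_diff)
  ultimately show ?thesis by (simp add: ball_hyp_def eps_close_def)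
qed

lemma card_narrow_window_lt:
  assumes "n > 0" "K \<subseteq> {..n}" "\<not> tight (X_TH n) (H_TH n) \<alpha> \<alpha> (threshold_hyp n ` K)"
    and "a \<le> n" "real b - real a \<le> \<alpha> * real n"
  shows "real (card (K \<inter> {a..b})) < \<alpha> * real (card K)"
proof -
  let ?B = "ball_hyp (X_TH n) (H_TH n) (threshold_hyp n a) \<alpha>"
  have "threshold_hyp n ` (K \<inter> {a..b}) \<subseteq> threshold_hyp n ` K \<inter> ?B"
    using assms(2,5) by (auto intro!: threshold_hyp_in_ball[OF assms(1)])
  moreover have "finite (threshold_hyp n ` K \<inter> ?B)"
    using finite_subset[OF assms(2)] by simp
  ultimately have "card (threshold_hyp n ` (K \<inter> {a..b})) \<le> card (threshold_hyp n ` K \<inter> ?B)"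
    by (rule card_mono[rotated])
  then have "card (K \<inter> {a..b}) \<le> card (threshold_hyp n ` K \<inter> ?B)"
    by (simp add: card_threshold_hyp_image[OF assms(1)])
  moreover have "\<not> \<alpha> * real (card K) \<le> real (card (threshold_hyp n ` K \<inter> ?B))"
    using assms(3,4)
    unfolding tight_def H_TH_eq_image card_threshold_hyp_image[OF assms(1)] by blast
  ultimately show ?thesis by linarith
qed

lemma threshold_quantiles_far_apart:
  assumes "n > 0" "\<alpha> < 1/3" "K \<subseteq> {..n}"
    and nt: "\<not> tight (X_TH n) (H_TH n) \<alpha> \<alpha> (threshold_hyp n ` K)"
    and "a \<in> K" "real (card (K \<inter> {..<a})) < \<alpha> * real (card K)"
    and "real (card (K \<inter> {b<..})) < \<alpha> * real (card K)"
  shows "\<alpha> * real n < real b - real a"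
proof (rule ccontr)
  assume "\<not> ?thesis"
  then have window: "real (card (K \<inter> {a..b})) < \<alpha> * real (card K)"
    using assms(3,5) by (intro card_narrow_window_lt[OF assms(1,3) nt]) auto
  have "finite K" using assms(3) finite_subset by blast
  then have "card K \<le> card (K \<inter> {..<a} \<union> K \<inter> {a..b} \<union> K \<inter> {b<..})"
    by (intro card_mono) auto
  also have "\<dots> \<le> card (K \<inter> {..<a}) + card (K \<inter> {a..b}) + card (K \<inter> {b<..})"
    using card_Un_le[of "K \<inter> {..<a}" "K \<inter> {a..b}"]
      card_Un_le[of "K \<inter> {..<a} \<union> K \<inter> {a..b}" "K \<inter> {b<..}"] by linarith
  finally have "real (card K) < 3 * (\<alpha> * real (card K))"
    using assms(6,7) window by linarith
  moreover have "0 < \<alpha> * real (card K)"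
    using not_tight_imp_pos[OF nt] by (simp add: H_TH_eq_image card_threshold_hyp_image[OF assms(1)])
  then have "0 < real (card K)" by (cases "card K = 0") auto
  then have "(3 * \<alpha>) * real (card K) < 1 * real (card K)"
    using assms(2) by (intro mult_strict_right_mono) auto
  ultimately show False by simp
qed

lemma density_gap_threshold_split:
  assumes "n > 0" "finite K" "b \<in> K" "a < b"
  shows "\<bar>density (grid_point n ` {a<..b}) (threshold_hyp n ` (K \<inter> {..a}))
          - density (grid_point n ` {a<..b}) (threshold_hyp n ` (K \<inter> {b..}))\<bar> = 1"
proof -
  have "density (grid_point n ` {a<..b}) (threshold_hyp n ` (K \<inter> {..a})) = 0"
    by (rule density_eq_0) (auto simp: threshold_hyp_grid_point_iff[OF assms(1)])
  moreover have "density (grid_point n ` {a<..b}) (threshold_hyp n ` (K \<inter> {b..})) = 1"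
    using assms by (intro density_eq_1) (auto simp: threshold_hyp_grid_point_iff)
  ultimately show ?thesis by simp
qed

lemma threshold_split_separates:
  assumes "n > 0" "0 \<le> \<alpha>" "\<alpha> \<le> 1" "K \<subseteq> {..n}" "b \<in> K"
    and gap: "\<alpha> * real n < real b - real a"
    and lower: "\<alpha> * real (card K) \<le> real (card (K \<inter> {..a}))"
    and upper: "\<alpha> * real (card K) \<le> real (card (K \<inter> {b..}))"
  defines "T \<equiv> threshold_hyp n ` K"
  shows "\<exists>S T0 T1. S \<subseteq> X_TH n \<and> T0 \<subseteq> T \<and> T1 \<subseteq> T \<and> T0 \<inter> T1 = {} \<and>
      \<alpha> * real (card (X_TH n)) \<le> real (card S) \<and>
      \<alpha> * real (card T) \<le> real (card T0) \<and> \<alpha> * real (card T) \<le> real (card T1) \<and>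
      \<alpha> \<le> \<bar>density S T0 - density S T1\<bar>"
proof (intro exI conjI)
  have "0 \<le> \<alpha> * real n" using assms(2) by simp
  with gap have "a < b" by simp
  have card_T: "card T = card K" unfolding T_def by (rule card_threshold_hyp_image[OF assms(1)])
  show "grid_point n ` {a<..b} \<subseteq> X_TH n" using assms(4,5) by (auto simp: X_TH_eq_image)
  have "inj_on (grid_point n) {a<..b}" using inj_grid_point[OF assms(1)] by (rule inj_on_subset) simp
  then show "\<alpha> * real (card (X_TH n)) \<le> real (card (grid_point n ` {a<..b}))"
    using gap \<open>a < b\<close> by (simp add: card_X_TH[OF assms(1)] card_image of_nat_diff)
  show "threshold_hyp n ` (K \<inter> {..a}) \<subseteq> T" "threshold_hyp n ` (K \<inter> {b..}) \<subseteq> T"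
    unfolding T_def by auto
  show "threshold_hyp n ` (K \<inter> {..a}) \<inter> threshold_hyp n ` (K \<inter> {b..}) = {}"
    using \<open>a < b\<close> inj_threshold_hyp[OF assms(1)] by (auto dest: injD)
  show "\<alpha> * real (card T) \<le> real (card (threshold_hyp n ` (K \<inter> {..a})))"
    using lower by (simp add: card_T card_threshold_hyp_image[OF assms(1)])
  show "\<alpha> * real (card T) \<le> real (card (threshold_hyp n ` (K \<inter> {b..})))"
    using upper by (simp add: card_T card_threshold_hyp_image[OF assms(1)])
  have "finite K" using assms(4) finite_subset by blast
  then show "\<alpha> \<le> \<bar>density (grid_point n ` {a<..b}) (threshold_hyp n ` (K \<inter> {..a}))
      - density (grid_point n ` {a<..b}) (threshold_hyp n ` (K \<inter> {b..}))\<bar>"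
    using density_gap_threshold_split[OF assms(1) _ assms(5) \<open>a < b\<close>] assms(3) by simp
qed

theorem mainTheorem3:
  fixes n :: nat and \<alpha> :: real
  assumes "n > 0" and "0 < \<alpha>" and "\<alpha> < 1/3"
  shows "separable (X_TH n) (H_TH n) \<alpha> \<alpha>"
  unfolding separable_def
proof (intro allI impI)
  fix T
  assume "T \<subseteq> H_TH n" and nt: "\<not> tight (X_TH n) (H_TH n) \<alpha> \<alpha> T"
  then obtain K where K: "K \<subseteq> {..n}" "T = threshold_hyp n ` K"
    unfolding H_TH_eq_image subset_image_iff by blast
  have "finite K" using K(1) finite_subset by blast
  have pos: "0 < \<alpha> * real (card K)"
    using not_tight_imp_pos[OF nt] K(2) by (simp add: H_TH_eq_image card_threshold_hyp_image[OF assms(1)])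
  have le: "\<alpha> * real (card K) \<le> real (card K)"
    using assms(2,3) by (intro mult_left_le_one_le) auto
  obtain a where a: "a \<in> K" "\<alpha> * real (card K) \<le> real (card (K \<inter> {..a}))"
      "real (card (K \<inter> {..<a})) < \<alpha> * real (card K)"
    by (rule exists_prefix_quantile[OF \<open>finite K\<close> pos le])
  obtain b where b: "b \<in> K" "\<alpha> * real (card K) \<le> real (card (K \<inter> {b..}))"
      "real (card (K \<inter> {b<..})) < \<alpha> * real (card K)"
    by (rule exists_suffix_quantile[OF \<open>finite K\<close> pos le])
  have "\<alpha> * real n < real b - real a"
    using threshold_quantiles_far_apart[OF assms(1,3) K(1) nt[unfolded K(2)] a(1,3) b(3)] .
  then show "\<exists>S T0 T1. S \<subseteq> X_TH n \<and> T0 \<subseteq> T \<and> T1 \<subseteq> T \<and> T0 \<inter> T1 = {} \<and>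
      \<alpha> * real (card (X_TH n)) \<le> real (card S) \<and>
      \<alpha> * real (card T) \<le> real (card T0) \<and> \<alpha> * real (card T) \<le> real (card T1) \<and>
      \<alpha> \<le> \<bar>density S T0 - density S T1\<bar>"
    unfolding K(2) using assms K(1) b(1) a(2) b(2) by (intro threshold_split_separates) auto
qed

end
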